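(* Let $H$ be the additive subgroup of $\mathbb{R}^{n}$ generated by vectors $u_{1},\dots,u_{m}$, labelled so that $u_1,\dots,u_q$ is a basis of $\mathrm{vect}(H)$, where $q=\dim(\mathrm{vect}(H))$. Then $\widetilde{\mathrm{dim}}(\overline{H})=L(M_{H})+i\,(q-L(M_{H}))$.
   Context: $\mathrm{vect}(A)$ denotes the real span of $A\subset\mathbb{R}^n$; $\overline{H}$ the closure of $H$. Complex dimension: for an additive subgroup $G$ of $\mathbb{R}^n$, $\widetilde{\mathrm{dim}}(G):=p+i(s-p)$ where $p=\max\{\dim V: V\text{ a vector subspace},\ V\subset G\}$ and $s=\dim \mathrm{vect}(G)$. Definition of $L(M_H)$ for an ordered generating family $u_1,\dots,u_m$ of $H$ whose first $q$ members form a basis of $\mathrm{vect}(H)$: for each $k=q+1,\dots,m$ write $u_k=\sum_{j=1}^{q}\alpha_{k,j}u_j$ with $\alpha_{k,j}\in\mathbb{R}$. Choose $I_k\subset\{1,\dots,q\}$ such that $\{1\}\cup\{\alpha_{k,i}: i\in I_k\}$ is a longest sublist of $1,\alpha_{k,1},\dots,\alpha_{k,q}$ that is linearly independent over $\mathbb{Q}$ (containing $1$). Then for each $j\notin I_k$ there are rationals $t_{k,j}$ and $\gamma^{(k)}_{j,i}$ ($i\in I_k$) with $\alpha_{k,j}=t_{k,j}+\sum_{i\in I_k}\gamma^{(k)}_{j,i}\alpha_{k,i}$. Choose $N\in\mathbb{N}^*$ with $N\gamma^{(k)}_{i,j}=:m^{(k)}_{i,j}\in\mathbb{Z}$ for all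 relevant indices, and set, for $q+1\le k\le m$ and $j\in I_k$, $u'_{k,j}=Nu_j+\sum_{i\notin I_k} m^{(k)}_{i,j}u_i$. $M_H$ is the matrix whose columns are all the vectors $u'_{k,j}$ ($q+1\le k\le m$, $j\in I_k$), and $L(M_H)=\mathrm{rank}(M_H)$ (the dimension of the span of the $u'_{k,j}$; it is $0$ if there are none). *)

theory Defs
  imports "HOL-Analysis.Analysis"
begin

definition int_gen :: "(nat \<Rightarrow> 'a::real_vector) \<Rightarrow> nat \<Rightarrow> 'a set" where
  "int_gen u m = {x. \<exists>c::nat \<Rightarrow> int. x = (\<Sum>j=1..m. of_int (c j) *\<^sub>R u j)}"

definition cdim_p :: "'a::euclidean_space set \<Rightarrow> nat" where
  "cdim_p G = Max {dim V | V. subspace V \<and> V \<subseteq> G}"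

definition cdim :: "'a::euclidean_space set \<Rightarrow> complex" where
  "cdim G = of_nat (cdim_p G) + \<i> * (of_nat (dim (span G)) - of_nat (cdim_p G))"

definition rat_indep_with_one :: "(nat \<Rightarrow> real) \<Rightarrow> nat set \<Rightarrow> bool" where
  "rat_indep_with_one a I \<longleftrightarrow>
     (\<forall>c0 (c::nat \<Rightarrow> real). c0 \<in> \<rat> \<and> (\<forall>i\<in>I. c i \<in> \<rat>) \<and> c0 + (\<Sum>i\<in>I. c i * a i) = 0
        \<longrightarrow> c0 = 0 \<and> (\<forall>i\<in>I. c i = 0))"

text \<open>The vector u'_{k,j} = N u_j + sum_{i \<in> {1..q} - I_k} m^{(k)}_{i,j} u_i
  with m^{(k)}_{i,j} = N * gamma k i j.\<close>
definition u_prime ::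
  "(nat \<Rightarrow> 'a::real_vector) \<Rightarrow> nat \<Rightarrow> (nat \<Rightarrow> nat set) \<Rightarrow> (nat \<Rightarrow> nat \<Rightarrow> nat \<Rightarrow> real)
     \<Rightarrow> nat \<Rightarrow> nat \<Rightarrow> nat \<Rightarrow> 'a" where
  "u_prime u q I gamma N k j =
     of_nat N *\<^sub>R u j + (\<Sum>i\<in>{1..q} - I k. (of_nat N * gamma k i j) *\<^sub>R u i)"

text \<open>L(M_H): rank of the matrix whose columns are the u'_{k,j}.\<close>
definition L_MH ::
  "(nat \<Rightarrow> 'a::euclidean_space) \<Rightarrow> nat \<Rightarrow> nat \<Rightarrow> (nat \<Rightarrow> nat set) \<Rightarrow> (nat \<Rightarrow> nat \<Rightarrow> nat \<Rightarrow> real)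
     \<Rightarrow> nat \<Rightarrow> nat" where
  "L_MH u q m I gamma N =
     dim (span {u_prime u q I gamma N k j | k j. k \<in> {q+1..m} \<and> j \<in> I k})"

end

(* Write W for the set of the vectors u'_{k,j}.  The closure of H contains the line through
   each u'_{k,j}: up to the factor N and vectors of H, u_k is a combination of the u'_{k,j},
   j \<in> I_k, whose coefficients are linearly independent over Q together with 1, so by
   Kronecker's theorem integer multiples of u_k, corrected by elements of H, approximate every
   real combination of these u'_{k,j}.  Conversely, a subspace V of the closure lies in span W:
   otherwise some linear form with rational values on the basis u_1, ..., u_q vanishes on W
   (whose vectors have rational coordinates) but not on V; it is then rational on all generators,
   after clearing denominators integer valued on H and hence on its closure, which is impossible
   on a line.  So span W is the largest subspace of the closure, while the closure spans the
   q-dimensional space spanned by H. *)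

theory Submission
  imports Defs
begin

section \<open>Integer combinations of finitely many vectors\<close>

lemma Rats_common_denominator:
  assumes "finite A" "\<And>x. x \<in> A \<Longrightarrow> f x \<in> \<rat>"
  obtains D :: nat where "D > 0" "\<And>x. x \<in> A \<Longrightarrow> real D * f x \<in> \<int>"
proof -
  have "\<exists>D::nat. D > 0 \<and> (\<forall>x\<in>A. real D * f x \<in> \<int>)"
    using assms
  proof (induction A rule: finite_induct)
    case empty
    show ?case by (intro exI[of _ 1]) auto
  next
    case (insert x A)
    then obtain D :: nat where D: "D > 0" "\<forall>y\<in>A. real D * f y \<in> \<int>" by auto
    have "f x \<in> \<rat>" using insert.prems by simp
    then obtain a b where ab: "b > 0" "f x = of_int a / of_int b"
      by (elim Rats_cases') blast
    have "real (D * nat b) * f y \<in> \<int>" if "y \<in> insert x A" for y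
    proof (cases "y = x")
      case True
      then show ?thesis using ab by simp
    next
      case False
      then have "real D * f y \<in> \<int>" using D that by simp
      moreover have "real (D * nat b) * f y = of_int b * (real D * f y)" using ab by simp
      ultimately show ?thesis by (metis Ints_mult Ints_of_int)
    qed
    then show ?case using D ab by (intro exI[of _ "D * nat b"]) simp
  qed
  then show ?thesis using that by blast
qed

lemma int_gen_zero: "0 \<in> int_gen u m"
  unfolding int_gen_def by (intro CollectI exI[of _ "\<lambda>_. 0"]) simp

lemma int_gen_add:
  assumes "a \<in> int_gen u m" "b \<in> int_gen u m"
  shows "a + b \<in> int_gen u m"
proof -
  obtain c c' where "a = (\<Sum>j=1..m. of_int (c j) *\<^sub>R u j)" "b = (\<Sum>j=1..m. of_int (c' j) *\<^sub>R u j)"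
    using assms by (auto simp: int_gen_def)
  then have "a + b = (\<Sum>j=1..m. of_int (c j + c' j) *\<^sub>R u j)"
    by (simp add: sum.distrib scaleR_add_left)
  then show ?thesis unfolding int_gen_def by (intro CollectI exI[of _ "\<lambda>j. c j + c' j"])
qed

lemma int_gen_scale:
  assumes "z \<in> \<int>" "a \<in> int_gen u m"
  shows "z *\<^sub>R a \<in> int_gen u m"
proof -
  obtain n where n: "z = of_int n" using assms(1) by (elim Ints_cases)
  obtain c where "a = (\<Sum>j=1..m. of_int (c j) *\<^sub>R u j)" using assms(2) by (auto simp: int_gen_def)
  then have "z *\<^sub>R a = (\<Sum>j=1..m. of_int (n * c j) *\<^sub>R u j)"
    by (simp add: n scaleR_sum_right)
  then show ?thesis unfolding int_gen_def by (intro CollectI exI[of _ "\<lambda>j. n * c j"])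
qed

lemma int_gen_diff: "a \<in> int_gen u m \<Longrightarrow> b \<in> int_gen u m \<Longrightarrow> a - b \<in> int_gen u m"
  using int_gen_add[of a u m "(-1) *\<^sub>R b"] int_gen_scale[of "-1" b u m] by simp

lemma int_gen_sum: "(\<And>i. i \<in> F \<Longrightarrow> x i \<in> int_gen u m) \<Longrightarrow> sum x F \<in> int_gen u m"
  by (induction F rule: infinite_finite_induct) (auto intro: int_gen_add int_gen_zero)

lemma int_gen_generator:
  assumes "j \<in> {1..m}"
  shows "u j \<in> int_gen u m"
proof -
  have "(\<Sum>i=1..m. of_int (if i = j then 1 else 0) *\<^sub>R u i) = (\<Sum>i=1..m. if i = j then u i else 0)"
    by (intro sum.cong) auto
  also have "\<dots> = u j" using assms by simp
  finally show ?thesis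
    unfolding int_gen_def by (intro CollectI exI[of _ "\<lambda>i. if i = j then 1 else 0"]) simp
qed

section \<open>Linear forms on lattices and rational subspaces\<close>

lemma subspace_lines_in_closure:
  fixes S :: "'a::real_normed_vector set"
  assumes "0 \<in> S" and add: "\<And>a b. a \<in> S \<Longrightarrow> b \<in> S \<Longrightarrow> a + b \<in> S"
  shows "subspace {x. \<forall>r. r *\<^sub>R x \<in> closure S}"
proof -
  have "closure S + closure S \<subseteq> closure S"
    using closure_sum[of S S] closure_mono[of "S + S" S] add
    by (auto simp: set_plus_def)
  then have "a + b \<in> closure S" if "a \<in> closure S" "b \<in> closure S" for a b
    using that by (auto intro: set_plus_intro)
  then show ?thesis
    using \<open>0 \<in> S\<close> closure_subset unfolding subspace_def
    by (auto simp: scaleR_add_right)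
qed

lemma linear_Ints_on_closure_int_gen:
  fixes g :: "'a::euclidean_space \<Rightarrow> real"
  assumes "linear g" "\<And>j. j \<in> {1..m} \<Longrightarrow> g (u j) \<in> \<int>" "x \<in> closure (int_gen u m)"
  shows "g x \<in> \<int>"
proof -
  have "g y \<in> \<int>" if y: "y \<in> int_gen u m" for y
  proof -
    obtain c where "y = (\<Sum>j=1..m. of_int (c j) *\<^sub>R u j)" using y by (auto simp: int_gen_def)
    then have "g y = (\<Sum>j=1..m. of_int (c j) * g (u j))"
      using \<open>linear g\<close> by (simp add: linear_sum linear_scale)
    also have "\<dots> \<in> \<int>" using assms(2) by (intro Ints_sum Ints_mult) auto
    finally show ?thesis .
  qed
  then have "closure (int_gen u m) \<subseteq> g -` \<int>"
    using \<open>linear g\<close>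
    by (intro closure_minimal continuous_closed_vimage closed_Ints linear_continuous_at
          linear_conv_bounded_linear[THEN iffD1]) auto
  then show ?thesis using assms(3) by blast
qed

lemma linear_Ints_on_subspace_eq_0:
  fixes g :: "'a::real_vector \<Rightarrow> real"
  assumes "linear g" "subspace V" "\<And>y. y \<in> V \<Longrightarrow> g y \<in> \<int>" "x \<in> V"
  shows "g x = 0"
proof (rule ccontr)
  assume "g x \<noteq> 0"
  then have "g ((1 / (2 * g x)) *\<^sub>R x) = 1 / 2"
    using \<open>linear g\<close> by (simp add: linear_scale)
  moreover have "(1 / (2 * g x)) *\<^sub>R x \<in> V"
    using assms(2,4) by (rule subspace_scale)
  ultimately have "(1 / 2 :: real) \<in> \<int>" using assms(3) by metis
  then obtain z :: int where "1 / 2 = real_of_int z" by (elim Ints_cases)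
  then have "1 = 2 * z" by linarith
  then show False by presburger
qed

definition rat_span :: "'a::real_vector set \<Rightarrow> 'a set" where
  "rat_span B = {v. \<exists>c. (\<forall>b\<in>B. c b \<in> \<rat>) \<and> v = (\<Sum>b\<in>B. c b *\<^sub>R b)}"

lemma rat_span_base:
  assumes "finite B" "b \<in> B"
  shows "b \<in> rat_span B"
proof -
  have "(\<Sum>b'\<in>B. (if b' = b then 1 else 0) *\<^sub>R b') = b"
    using assms by (simp add: if_distrib[of "\<lambda>c. c *\<^sub>R _"] cong: if_cong)
  then show ?thesis
    unfolding rat_span_def by (intro CollectI exI[of _ "\<lambda>b'. if b' = b then 1 else 0"]) auto
qed

lemma rat_span_zero: "0 \<in> rat_span B"
  unfolding rat_span_def by (intro CollectI exI[of _ "\<lambda>_. 0"]) simp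

lemma rat_span_add:
  assumes "v \<in> rat_span B" "w \<in> rat_span B"
  shows "v + w \<in> rat_span B"
proof -
  obtain c d where "\<forall>b\<in>B. c b \<in> \<rat>" "v = (\<Sum>b\<in>B. c b *\<^sub>R b)"
    "\<forall>b\<in>B. d b \<in> \<rat>" "w = (\<Sum>b\<in>B. d b *\<^sub>R b)"
    using assms by (auto simp: rat_span_def)
  then show ?thesis unfolding rat_span_def
    by (intro CollectI exI[of _ "\<lambda>b. c b + d b"]) (simp add: sum.distrib scaleR_add_left)
qed

lemma rat_span_scale:
  assumes "r \<in> \<rat>" "v \<in> rat_span B"
  shows "r *\<^sub>R v \<in> rat_span B"
proof -
  obtain c where "\<forall>b\<in>B. c b \<in> \<rat>" "v = (\<Sum>b\<in>B. c b *\<^sub>R b)"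
    using assms by (auto simp: rat_span_def)
  then show ?thesis unfolding rat_span_def using assms(1)
    by (intro CollectI exI[of _ "\<lambda>b. r * c b"]) (simp add: scaleR_sum_right)
qed

lemma rat_span_sum: "(\<And>i. i \<in> F \<Longrightarrow> x i \<in> rat_span B) \<Longrightarrow> sum x F \<in> rat_span B"
  by (induction F rule: infinite_finite_induct) (auto intro: rat_span_add rat_span_zero)

lemma rat_span_subset_span: "rat_span B \<subseteq> span B"
  unfolding rat_span_def by (auto intro: span_sum span_scale span_base)

lemma linear_Rats_on_rat_span:
  fixes f :: "'a::real_vector \<Rightarrow> real"
  assumes "linear f" "\<And>b. b \<in> B \<Longrightarrow> f b \<in> \<rat>" "v \<in> rat_span B"
  shows "f v \<in> \<rat>"
proof -
  obtain c where c: "\<forall>b\<in>B. c b \<in> \<rat>" "v = (\<Sum>b\<in>B. c b *\<^sub>R b)"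
    using assms(3) by (auto simp: rat_span_def)
  then have "f v = (\<Sum>b\<in>B. c b * f b)"
    using \<open>linear f\<close> by (simp add: linear_sum linear_scale)
  then show ?thesis using c(1) assms(2) by (simp add: Rats_sum)
qed

lemma rational_functional_nonzero:
  fixes y :: "'a::real_vector"
  assumes "independent B" "finite B" "y \<in> span B" "y \<noteq> 0"
  obtains f :: "'a \<Rightarrow> real" where "linear f" "\<And>b. b \<in> B \<Longrightarrow> f b \<in> \<rat>" "f y \<noteq> 0"
proof -
  obtain c where y: "y = (\<Sum>b\<in>B. c b *\<^sub>R b)"
    using assms(2,3) by (auto simp: span_finite)
  then obtain p where p: "p \<in> B" "c p \<noteq> 0"
    using \<open>y \<noteq> 0\<close> by (metis (no_types, lifting) scale_eq_0_iff sum.neutral)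
  obtain f :: "'a \<Rightarrow> real" where f: "linear f" "\<And>b. b \<in> B \<Longrightarrow> f b = (if b = p then 1 else 0)"
    using linear_independent_extend[OF assms(1), of "\<lambda>b. if b = p then 1 else 0"] by auto
  have "f y = (\<Sum>b\<in>B. c b * (if b = p then 1 else 0))"
    using f by (simp add: y linear_sum linear_scale)
  also have "\<dots> = c p" using p assms(2) by (simp add: if_distrib cong: if_cong)
  finally show ?thesis using that f p by auto
qed

lemma rational_separation:
  fixes y :: "'a::real_vector"
  assumes B: "independent B" "finite B"
    and G: "finite G" "G \<subseteq> rat_span B"
    and y: "y \<in> span B" "y \<notin> span G"
  shows "\<exists>f :: 'a \<Rightarrow> real. linear f \<and> (\<forall>b\<in>B. f b \<in> \<rat>) \<and> (\<forall>g\<in>G. f g = 0) \<and> f y \<noteq> 0"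
  using G y
proof (induction G arbitrary: y rule: finite_induct)
  case empty
  then have "y \<noteq> 0" by (auto simp: span_zero)
  then obtain f :: "'a \<Rightarrow> real" where "linear f" "\<forall>b\<in>B. f b \<in> \<rat>" "f y \<noteq> 0"
    using rational_functional_nonzero[OF B \<open>y \<in> span B\<close>] by metis
  then show ?case by blast
next
  case (insert g G)
  have G_rat: "G \<subseteq> rat_span B" and g: "g \<in> rat_span B"
    using insert.prems(1) by auto
  show ?case
  proof (cases "g \<in> span G")
    case True
    then have "y \<notin> span G" using insert.prems(3) span_mono[of G "insert g G"] by blast
    then obtain f :: "'a \<Rightarrow> real" where
      f: "linear f" "\<forall>b\<in>B. f b \<in> \<rat>" "\<forall>h\<in>G. f h = 0" "f y \<noteq> 0"
      using insert.IH[OF G_rat insert.prems(2)] by blast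
    have "f g = 0" using linear_eq_0_on_span[OF f(1) _ True] f(3) by blast
    then show ?thesis using f by auto
  next
    case False
    then obtain f2 :: "'a \<Rightarrow> real" where
      f2: "linear f2" "\<forall>b\<in>B. f2 b \<in> \<rat>" "\<forall>h\<in>G. f2 h = 0" "f2 g \<noteq> 0"
      using insert.IH[OF G_rat] g rat_span_subset_span by blast
    \<comment> \<open>Separate the projection of y along g onto the kernel of f2, then pull back.\<close>
    define \<phi> where "\<phi> x = x - (f2 x / f2 g) *\<^sub>R g" for x
    have lin_phi: "linear \<phi>"
      unfolding \<phi>_def using f2(1)
      by (intro linearI) (simp_all add: linear_add linear_scale algebra_simps add_divide_distrib)
    have "\<phi> y \<in> span B"
      unfolding \<phi>_def using insert.prems(2) g rat_span_subset_span
      by (intro span_diff span_scale) auto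
    moreover have "\<phi> y \<notin> span G"
    proof
      assume "\<phi> y \<in> span G"
      then have "\<phi> y + (f2 y / f2 g) *\<^sub>R g \<in> span (insert g G)"
        using span_mono[of G "insert g G"]
        by (intro span_add span_scale) (auto intro: span_base)
      then show False using insert.prems(3) by (simp add: \<phi>_def)
    qed
    ultimately obtain f1 :: "'a \<Rightarrow> real" where
      f1: "linear f1" "\<forall>b\<in>B. f1 b \<in> \<rat>" "\<forall>h\<in>G. f1 h = 0" "f1 (\<phi> y) \<noteq> 0"
      using insert.IH[OF G_rat] by blast
    have "f2 g \<in> \<rat>" "f1 g \<in> \<rat>"
      using linear_Rats_on_rat_span g f1(1,2) f2(1,2) by blast+
    then have "\<forall>b\<in>B. (f1 \<circ> \<phi>) b \<in> \<rat>"
      using f1(1,2) f2(2) by (simp add: \<phi>_def linear_diff linear_scale)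
    moreover have "\<forall>h\<in>insert g G. (f1 \<circ> \<phi>) h = 0"
      using f1(1,3) f2(3,4) by (simp add: \<phi>_def linear_diff linear_scale)
    ultimately show ?thesis
      using f1(4) linear_compose[OF lin_phi f1(1)] by (intro exI[of _ "f1 \<circ> \<phi>"]) (simp add: comp_def)
  qed
qed

section \<open>Kronecker approximation for families independent over Q with 1\<close>

lemma rat_indep_with_one_scale:
  assumes ind: "rat_indep_with_one a I" and c: "c \<in> \<rat>" "c \<noteq> 0"
  shows "rat_indep_with_one (\<lambda>i. c * a i) I"
  unfolding rat_indep_with_one_def
proof (intro allI impI)
  fix c0 and d :: "nat \<Rightarrow> real"
  assume rel: "c0 \<in> \<rat> \<and> (\<forall>i\<in>I. d i \<in> \<rat>) \<and> c0 + (\<Sum>i\<in>I. d i * (c * a i)) = 0"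
  have "c0 + (\<Sum>i\<in>I. (d i * c) * a i) = 0" using rel by (simp add: mult.assoc)
  moreover have "\<forall>i\<in>I. d i * c \<in> \<rat>" using rel c(1) by simp
  ultimately have "c0 = 0 \<and> (\<forall>i\<in>I. d i * c = 0)"
    using ind rel unfolding rat_indep_with_one_def
    by (elim allE[of _ c0] allE[of _ "\<lambda>i. d i * c"]) auto
  then show "c0 = 0 \<and> (\<forall>i\<in>I. d i = 0)" using c(2) by simp
qed

lemma int_independent_if_int_relations_trivial:
  fixes \<theta> :: "nat \<Rightarrow> real"
  assumes triv: "\<And>cf :: nat \<Rightarrow> int. (\<Sum>i\<le>n. of_int (cf i) * \<theta> i) = 0 \<Longrightarrow> \<forall>i\<le>n. cf i = 0"
  shows "inj_on \<theta> {..n}" and "module.independent (\<lambda>r x. of_int r * x) (\<theta> ` {..n})"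
proof -
  show inj: "inj_on \<theta> {..n}"
  proof (rule inj_onI, rule ccontr)
    fix i j assume ij: "i \<in> {..n}" "j \<in> {..n}" "\<theta> i = \<theta> j" "i \<noteq> j"
    define cf where "cf k = (if k = i then 1 else if k = j then -1 else (0::int))" for k
    have "(\<Sum>k\<le>n. of_int (cf k) * \<theta> k) = (\<Sum>k\<le>n. (if k = i then \<theta> k else 0) - (if k = j then \<theta> k else 0))"
      by (intro sum.cong) (auto simp: cf_def \<open>i \<noteq> j\<close>)
    also have "\<dots> = 0" using ij by (simp add: sum_subtractf)
    finally have "cf i = 0" using triv ij(1) by blast
    then show False by (simp add: cf_def)
  qed
  interpret Z: Modules.module "\<lambda>r x. real_of_int r * x"
    by (simp add: Modules.module.intro distrib_left mult.commute)
  show "Z.independent (\<theta> ` {..n})"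
    unfolding Z.dependent_explicit
  proof clarify
    fix T c v
    assume T: "finite T" "T \<subseteq> \<theta> ` {..n}" "(\<Sum>v\<in>T. of_int (c v) * v) = 0" "v \<in> T" "c v \<noteq> 0"
    define S where "S = {i\<in>{..n}. \<theta> i \<in> T}"
    have injS: "inj_on \<theta> S" using inj by (rule inj_on_subset) (auto simp: S_def)
    have imS: "\<theta> ` S = T" using T(2) by (auto simp: S_def)
    define cf where "cf i = (if i \<in> S then c (\<theta> i) else 0)" for i
    have "(\<Sum>i\<le>n. of_int (cf i) * \<theta> i) = (\<Sum>i\<in>{..n}. if i \<in> S then of_int (c (\<theta> i)) * \<theta> i else 0)"
      by (intro sum.cong) (auto simp: cf_def)
    also have "\<dots> = (\<Sum>i\<in>S. of_int (c (\<theta> i)) * \<theta> i)"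
      by (simp add: sum.inter_restrict[symmetric]) (rule sum.cong, auto simp: S_def)
    also have "\<dots> = (\<Sum>v\<in>T. of_int (c v) * v)"
      using sum.reindex[OF injS, of "\<lambda>v. of_int (c v) * v"] imS by simp
    finally have "\<forall>i\<le>n. cf i = 0" using T(3) triv by simp
    moreover obtain i where "i \<in> S" "\<theta> i = v" using imS T(4) by auto
    ultimately show False using T(5) by (auto simp: cf_def S_def)
  qed
qed

lemma Kronecker_rat_indep_with_one:
  fixes a x :: "nat \<Rightarrow> real"
  assumes "finite I" and ind: "rat_indep_with_one a I" and "\<epsilon> > 0"
  obtains n :: int and z :: "nat \<Rightarrow> int"
    where "\<And>i. i \<in> I \<Longrightarrow> \<bar>of_int n * a i - of_int (z i) - x i\<bar> < \<epsilon>"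
proof -
  define p where "p = card I"
  obtain e where e: "bij_betw e {..<p} I"
    using ex_bij_betw_nat_finite[OF \<open>finite I\<close>] by (auto simp: p_def atLeast0LessThan)
  define ie where "ie = inv_into {..<p} e"
  have ie: "ie j < p" "e (ie j) = j" if "j \<in> I" for j
    using that e bij_betw_inv_into_right[OF e] bij_betwE[OF bij_betw_inv_into[OF e]]
    by (auto simp: ie_def)
  have ie_e: "ie (e i) = i" if "i < p" for i
    using e that by (simp add: ie_def bij_betw_def inv_into_f_f)
  \<comment> \<open>Kronecker's theorem wants the numbers indexed by an initial segment, with 1 in last position.\<close>
  define \<theta> where "\<theta> i = (if i = p then 1 else a (e i))" for i
  have triv: "\<forall>i\<le>p. cf i = 0" if rel: "(\<Sum>i\<le>p. of_int (cf i) * \<theta> i) = 0" for cf :: "nat \<Rightarrow> int"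
  proof -
    have "(\<Sum>i<p. of_int (cf i) * a (e i)) = (\<Sum>j\<in>I. of_int (cf (ie j)) * a j)"
      using sum.reindex_bij_betw[OF e, of "\<lambda>j. of_int (cf (ie j)) * a j"] by (simp add: ie_e)
    moreover have "{..p} = insert p {..<p}" by auto
    ultimately have "of_int (cf p) + (\<Sum>j\<in>I. of_int (cf (ie j)) * a j) = 0"
      using rel by (simp add: \<theta>_def)
    then have "real_of_int (cf p) = 0 \<and> (\<forall>j\<in>I. real_of_int (cf (ie j)) = 0)"
      using ind unfolding rat_indep_with_one_def
      by (elim allE[of _ "of_int (cf p)"] allE[of _ "\<lambda>j. of_int (cf (ie j))"]) auto
    then have "cf p = 0" "\<forall>j\<in>I. cf (ie j) = 0" by auto
    moreover have "cf i = cf (ie (e i))" "e i \<in> I" if "i < p" for i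
      using ie_e[OF that] bij_betwE[OF e] that by auto
    ultimately show ?thesis by (metis antisym_conv2)
  qed
  have "\<theta> p = 1" by (simp add: \<theta>_def)
  obtain n z where nz: "\<And>i. i < p \<Longrightarrow> \<bar>of_int n * \<theta> i - of_int (z i) - x (e i)\<bar> < \<epsilon>"
    using Kronecker_thm_2[OF int_independent_if_int_relations_trivial(2)[where \<theta>=\<theta> and n=p, OF triv]
        int_independent_if_int_relations_trivial(1)[where \<theta>=\<theta> and n=p, OF triv] \<open>\<theta> p = 1\<close> \<open>\<epsilon> > 0\<close>,
        where \<alpha> = "\<lambda>i. x (e i)"] by metis
  have "\<bar>of_int n * a j - of_int (z (ie j)) - x j\<bar> < \<epsilon>" if "j \<in> I" for j
    using nz[of "ie j"] ie[OF that] by (simp add: \<theta>_def)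
  then show ?thesis by (rule that)
qed

lemma sum_in_closure_int_gen_if_rat_indep:
  fixes U :: "nat \<Rightarrow> 'a::real_normed_vector"
  assumes I: "finite I" "rat_indep_with_one a I"
    and U: "\<And>i. i \<in> I \<Longrightarrow> U i \<in> int_gen u m" "(\<Sum>i\<in>I. a i *\<^sub>R U i) \<in> int_gen u m"
  shows "(\<Sum>i\<in>I. x i *\<^sub>R U i) \<in> closure (int_gen u m)"
  unfolding closure_approachable
proof (intro allI impI)
  fix \<epsilon> :: real assume "\<epsilon> > 0"
  define K where "K = 1 + (\<Sum>i\<in>I. norm (U i))"
  have "K > 0" unfolding K_def by (smt (verit) sum_nonneg norm_ge_zero)
  then obtain n z where nz: "\<And>i. i \<in> I \<Longrightarrow> \<bar>of_int n * a i - of_int (z i) - x i\<bar> < \<epsilon> / K"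
    using Kronecker_rat_indep_with_one[OF I] \<open>\<epsilon> > 0\<close> by (metis divide_pos_pos)
  define h where "h = of_int n *\<^sub>R (\<Sum>i\<in>I. a i *\<^sub>R U i) - (\<Sum>i\<in>I. of_int (z i) *\<^sub>R U i)"
  have "h \<in> int_gen u m"
    unfolding h_def
    by (intro int_gen_diff int_gen_scale[OF Ints_of_int] U(2) int_gen_sum U(1))
  have "h - (\<Sum>i\<in>I. x i *\<^sub>R U i) = (\<Sum>i\<in>I. (of_int n * a i - of_int (z i) - x i) *\<^sub>R U i)"
    by (simp add: h_def scaleR_sum_right scaleR_diff_left sum_subtractf)
  then have "norm (h - (\<Sum>i\<in>I. x i *\<^sub>R U i)) \<le> (\<Sum>i\<in>I. \<bar>of_int n * a i - of_int (z i) - x i\<bar> * norm (U i))"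
    by (metis (no_types, lifting) norm_scaleR norm_sum sum.cong)
  also have "\<dots> \<le> (\<Sum>i\<in>I. (\<epsilon> / K) * norm (U i))"
    using nz by (intro sum_mono mult_right_mono) (auto intro: less_imp_le)
  also have "\<dots> = (\<epsilon> / K) * (K - 1)" by (simp add: K_def sum_distrib_left)
  also have "\<dots> < \<epsilon>" using \<open>\<epsilon> > 0\<close> \<open>K > 0\<close> by (simp add: field_simps)
  finally show "\<exists>y\<in>int_gen u m. dist y (\<Sum>i\<in>I. x i *\<^sub>R U i) < \<epsilon>"
    using \<open>h \<in> int_gen u m\<close> by (auto simp: dist_norm)
qed

section \<open>The closure of the subgroup\<close>

lemma cdim_p_eqI:
  fixes G V0 :: "'a::euclidean_space set"
  assumes "subspace V0" "V0 \<subseteq> G" "\<And>V. subspace V \<Longrightarrow> V \<subseteq> G \<Longrightarrow> V \<subseteq> V0"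
  shows "cdim_p G = dim V0"
  unfolding cdim_p_def
proof (rule Max_eqI)
  have "{dim V |V. subspace V \<and> V \<subseteq> G} \<subseteq> {..dim V0}"
    using assms(3) by (auto intro: dim_subset)
  then show "finite {dim V |V. subspace V \<and> V \<subseteq> G}" by (rule finite_subset) simp
  show "y \<le> dim V0" if "y \<in> {dim V |V. subspace V \<and> V \<subseteq> G}" for y
    using that assms(3) by (auto intro: dim_subset)
  show "dim V0 \<in> {dim V |V. subspace V \<and> V \<subseteq> G}" using assms(1,2) by blast
qed

locale ordered_generators =
  fixes u :: "nat \<Rightarrow> 'a::euclidean_space"
    and m q N :: nat
    and alpha :: "nat \<Rightarrow> nat \<Rightarrow> real"
    and I :: "nat \<Rightarrow> nat set"
    and t :: "nat \<Rightarrow> nat \<Rightarrow> real"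
    and gamma :: "nat \<Rightarrow> nat \<Rightarrow> nat \<Rightarrow> real"
  assumes qm: "q \<le> m"
    and basis_inj: "inj_on u {1..q}"
    and basis_indep: "independent (u ` {1..q})"
    and basis_span: "span (u ` {1..q}) = span (int_gen u m)"
    and alpha_def: "\<forall>k\<in>{q+1..m}. u k = (\<Sum>j=1..q. alpha k j *\<^sub>R u j)"
    and I_sub: "\<forall>k\<in>{q+1..m}. I k \<subseteq> {1..q}"
    and I_indep: "\<forall>k\<in>{q+1..m}. rat_indep_with_one (alpha k) (I k)"
    and t_rat: "\<forall>k\<in>{q+1..m}. \<forall>j\<in>{1..q} - I k. t k j \<in> \<rat>"
    and gamma_rel: "\<forall>k\<in>{q+1..m}. \<forall>j\<in>{1..q} - I k.
                      alpha k j = t k j + (\<Sum>i\<in>I k. gamma k j i * alpha k i)"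
    and N_pos: "N > 0"
    and N_int: "\<forall>k\<in>{q+1..m}. \<forall>j\<in>{1..q} - I k. \<forall>i\<in>I k. of_nat N * gamma k j i \<in> \<int>"
begin

abbreviation u' :: "nat \<Rightarrow> nat \<Rightarrow> 'a" where
  "u' \<equiv> u_prime u q I gamma N"

definition uprimes :: "'a set" where
  "uprimes = {u' k j | k j. k \<in> {q+1..m} \<and> j \<in> I k}"

lemma L_MH_eq_dim_span_uprimes: "L_MH u q m I gamma N = dim (span uprimes)"
  by (simp add: L_MH_def uprimes_def)

lemma I_subset: "k \<in> {q+1..m} \<Longrightarrow> I k \<subseteq> {1..q}"
  using I_sub by blast

lemma u_in_int_gen: "j \<in> {1..q} \<Longrightarrow> u j \<in> int_gen u m"
  using qm by (intro int_gen_generator) auto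

lemma u'_in_int_gen:
  assumes k: "k \<in> {q+1..m}" and i: "i \<in> I k"
  shows "u' k i \<in> int_gen u m"
  unfolding u_prime_def
proof (intro int_gen_add int_gen_sum int_gen_scale)
  show "u i \<in> int_gen u m" using I_subset[OF k] i by (intro u_in_int_gen) auto
next
  fix j assume "j \<in> {1..q} - I k"
  then show "real N * gamma k j i \<in> \<int>" "u j \<in> int_gen u m"
    using N_int k i u_in_int_gen by auto
qed simp

lemma u'_in_rat_span:
  assumes k: "k \<in> {q+1..m}" and i: "i \<in> I k"
  shows "u' k i \<in> rat_span (u ` {1..q})"
  unfolding u_prime_def
proof (intro rat_span_add rat_span_sum rat_span_scale rat_span_base)
  show "u i \<in> u ` {1..q}" using I_subset[OF k] i by auto
next
  fix j assume "j \<in> {1..q} - I k"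
  then show "real N * gamma k j i \<in> \<rat>" "u j \<in> u ` {1..q}"
    using N_int k i by (auto intro: Ints_subset_Rats[THEN subsetD])
qed auto

lemma u_relation:
  assumes k: "k \<in> {q+1..m}"
  shows "real N *\<^sub>R (u k - (\<Sum>j\<in>{1..q} - I k. t k j *\<^sub>R u j)) = (\<Sum>i\<in>I k. alpha k i *\<^sub>R u' k i)"
proof -
  define J where "J = {1..q} - I k"
  have IJ: "I k \<subseteq> {1..q}" using I_subset[OF k] .
  have "(\<Sum>i\<in>I k. alpha k i *\<^sub>R u' k i)
      = real N *\<^sub>R ((\<Sum>i\<in>I k. alpha k i *\<^sub>R u i) + (\<Sum>i\<in>I k. \<Sum>j\<in>J. (gamma k j i * alpha k i) *\<^sub>R u j))"
    by (simp add: u_prime_def J_def scaleR_add_right scaleR_sum_right sum.distrib algebra_simps)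
  also have "(\<Sum>i\<in>I k. \<Sum>j\<in>J. (gamma k j i * alpha k i) *\<^sub>R u j) = (\<Sum>j\<in>J. (alpha k j - t k j) *\<^sub>R u j)"
    using gamma_rel k
    by (subst sum.swap) (auto simp: J_def scaleR_sum_left[symmetric] intro!: sum.cong)
  also have "(\<Sum>i\<in>I k. alpha k i *\<^sub>R u i) + (\<Sum>j\<in>J. (alpha k j - t k j) *\<^sub>R u j)
      = (\<Sum>j=1..q. alpha k j *\<^sub>R u j) - (\<Sum>j\<in>J. t k j *\<^sub>R u j)"
    using sum.subset_diff[OF IJ, of "\<lambda>j. alpha k j *\<^sub>R u j"]
    by (simp add: J_def scaleR_diff_left sum_subtractf)
  finally show ?thesis using alpha_def k by (simp add: J_def)
qed

lemma line_u'_in_closure: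
  assumes k: "k \<in> {q+1..m}" and i0: "i0 \<in> I k"
  shows "r *\<^sub>R u' k i0 \<in> closure (int_gen u m)"
proof -
  define J where "J = {1..q} - I k"
  have fin: "finite (I k)" using I_subset[OF k] finite_subset by blast
  obtain M :: nat where M: "M > 0" "\<And>j. j \<in> J \<Longrightarrow> real M * t k j \<in> \<int>"
    using Rats_common_denominator[of J "t k"] t_rat k by (auto simp: J_def)
  define c where "c = real M / real N"
  have "c \<in> \<rat>" "c \<noteq> 0" using M(1) N_pos by (auto simp: c_def)
  then have ind: "rat_indep_with_one (\<lambda>i. c * alpha k i) (I k)"
    using I_indep k by (intro rat_indep_with_one_scale) auto
  have "(\<Sum>i\<in>I k. (c * alpha k i) *\<^sub>R u' k i) = c *\<^sub>R (\<Sum>i\<in>I k. alpha k i *\<^sub>R u' k i)"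
    by (simp add: scaleR_sum_right)
  also have "\<dots> = real M *\<^sub>R u k - (\<Sum>j\<in>J. (real M * t k j) *\<^sub>R u j)"
    using N_pos
    by (simp add: u_relation[OF k, symmetric] c_def J_def scaleR_diff_right scaleR_sum_right)
  also have "\<dots> \<in> int_gen u m"
    using M k J_def u_in_int_gen
    by (intro int_gen_diff int_gen_scale int_gen_sum int_gen_generator) auto
  finally have "(\<Sum>i\<in>I k. (c * alpha k i) *\<^sub>R u' k i) \<in> int_gen u m" .
  then have "(\<Sum>i\<in>I k. (if i = i0 then r else 0) *\<^sub>R u' k i) \<in> closure (int_gen u m)"
    using fin ind u'_in_int_gen[OF k] by (intro sum_in_closure_int_gen_if_rat_indep) auto
  then show ?thesis
    using fin i0 by (simp add: if_distrib[of "\<lambda>c. c *\<^sub>R _"] cong: if_cong)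
qed

lemma span_uprimes_subset_closure: "span uprimes \<subseteq> closure (int_gen u m)"
proof -
  let ?L = "{x. \<forall>r. r *\<^sub>R x \<in> closure (int_gen u m)}"
  have "span uprimes \<subseteq> ?L"
    using line_u'_in_closure
    by (intro span_minimal subspace_lines_in_closure int_gen_zero int_gen_add) (auto simp: uprimes_def)
  moreover have "?L \<subseteq> closure (int_gen u m)"
    using scaleR_one by (metis (mono_tags, lifting) mem_Collect_eq subsetI)
  ultimately show ?thesis by blast
qed

lemma finite_uprimes: "finite uprimes"
proof -
  have "uprimes \<subseteq> (\<lambda>(k, j). u' k j) ` ({q+1..m} \<times> {1..q})"
    using I_subset by (fastforce simp: uprimes_def)
  then show ?thesis by (rule finite_subset) simp
qed

lemma uprimes_subset_rat_span: "uprimes \<subseteq> rat_span (u ` {1..q})"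
  using u'_in_rat_span by (auto simp: uprimes_def)

lemma closure_int_gen_subset_span: "closure (int_gen u m) \<subseteq> span (u ` {1..q})"
  using basis_span span_superset
  by (intro closure_minimal closed_subspace subspace_span) blast

lemma linear_Rats_on_generators:
  fixes f :: "'a \<Rightarrow> real"
  assumes f: "linear f" "\<And>j. j \<in> {1..q} \<Longrightarrow> f (u j) \<in> \<rat>" "\<And>w. w \<in> uprimes \<Longrightarrow> f w = 0"
    and k: "k \<in> {1..m}"
  shows "f (u k) \<in> \<rat>"
proof (cases "k \<le> q")
  case True
  then show ?thesis using f(2) k by simp
next
  case False
  then have k: "k \<in> {q+1..m}" using k by simp
  have "real N * (f (u k) - (\<Sum>j\<in>{1..q} - I k. t k j * f (u j))) = (\<Sum>i\<in>I k. alpha k i * f (u' k i))"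
    using arg_cong[OF u_relation[OF k], of f] f(1)
    by (simp add: linear_diff linear_scale linear_sum mult.assoc)
  also have "\<dots> = 0"
  proof (intro sum.neutral ballI)
    fix i assume "i \<in> I k"
    then have "u' k i \<in> uprimes" using k by (auto simp: uprimes_def)
    then show "alpha k i * f (u' k i) = 0" using f(3) by simp
  qed
  finally have "f (u k) = (\<Sum>j\<in>{1..q} - I k. t k j * f (u j))" using N_pos by simp
  also have "\<dots> \<in> \<rat>" using t_rat f(2) k by (intro Rats_sum Rats_mult) auto
  finally show ?thesis .
qed

lemma subspace_in_closure_subset_span_uprimes:
  assumes V: "subspace V" "V \<subseteq> closure (int_gen u m)"
  shows "V \<subseteq> span uprimes"
proof
  fix x assume "x \<in> V"
  show "x \<in> span uprimes"
  proof (rule ccontr)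
    assume "x \<notin> span uprimes"
    moreover have "x \<in> span (u ` {1..q})" using \<open>x \<in> V\<close> V(2) closure_int_gen_subset_span by blast
    ultimately obtain f :: "'a \<Rightarrow> real" where
      f: "linear f" "\<forall>b\<in>u ` {1..q}. f b \<in> \<rat>" "\<forall>w\<in>uprimes. f w = 0" "f x \<noteq> 0"
      using rational_separation[OF basis_indep _ finite_uprimes uprimes_subset_rat_span] by blast
    have "f (u j) \<in> \<rat>" if "j \<in> {1..m}" for j
      using linear_Rats_on_generators[OF f(1) _ _ that] f(2,3) by blast
    then obtain D :: nat where D: "D > 0" "\<And>j. j \<in> {1..m} \<Longrightarrow> real D * f (u j) \<in> \<int>"
      using Rats_common_denominator[of "{1..m}" "\<lambda>j. f (u j)"] by (metis finite_atLeastAtMost)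
    have lin: "linear (\<lambda>y. real D * f y)"
      by (rule linearI) (simp_all add: linear_add[OF f(1)] linear_scale[OF f(1)] algebra_simps)
    have "real D * f x = 0"
    proof (rule linear_Ints_on_subspace_eq_0[OF lin V(1) _ \<open>x \<in> V\<close>])
      show "real D * f y \<in> \<int>" if "y \<in> V" for y
        using linear_Ints_on_closure_int_gen[where u = u and m = m, OF lin D(2)] that V(2) by blast
    qed
    then show False using D(1) f(4) by simp
  qed
qed

lemma span_closure_int_gen: "span (closure (int_gen u m)) = span (u ` {1..q})"
proof
  show "span (closure (int_gen u m)) \<subseteq> span (u ` {1..q})"
    using closure_int_gen_subset_span by (simp add: span_minimal)
  show "span (u ` {1..q}) \<subseteq> span (closure (int_gen u m))"
    unfolding basis_span by (intro span_mono closure_subset)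
qed

lemma dim_span_basis: "dim (span (u ` {1..q})) = q"
  using dim_span_eq_card_independent[OF basis_indep] card_image[OF basis_inj] by simp

end

theorem theorem1p5:
  fixes u :: "nat \<Rightarrow> real ^ 'n"
    and m q N :: nat
    and alpha :: "nat \<Rightarrow> nat \<Rightarrow> real"
    and I :: "nat \<Rightarrow> nat set"
    and t :: "nat \<Rightarrow> nat \<Rightarrow> real"
    and gamma :: "nat \<Rightarrow> nat \<Rightarrow> nat \<Rightarrow> real"
  assumes qm: "q \<le> m"
    and basis_inj: "inj_on u {1..q}"
    and basis_indep: "independent (u ` {1..q})"
    and basis_span: "span (u ` {1..q}) = span (int_gen u m)"
    and alpha_def: "\<forall>k\<in>{q+1..m}. u k = (\<Sum>j=1..q. alpha k j *\<^sub>R u j)"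
    and I_sub: "\<forall>k\<in>{q+1..m}. I k \<subseteq> {1..q}"
    and I_indep: "\<forall>k\<in>{q+1..m}. rat_indep_with_one (alpha k) (I k)"
    and I_longest: "\<forall>k\<in>{q+1..m}. \<forall>J. J \<subseteq> {1..q} \<and> rat_indep_with_one (alpha k) J
                       \<longrightarrow> card J \<le> card (I k)"
    and t_rat: "\<forall>k\<in>{q+1..m}. \<forall>j\<in>{1..q} - I k. t k j \<in> \<rat>"
    and gamma_rat: "\<forall>k\<in>{q+1..m}. \<forall>j\<in>{1..q} - I k. \<forall>i\<in>I k. gamma k j i \<in> \<rat>"
    and gamma_rel: "\<forall>k\<in>{q+1..m}. \<forall>j\<in>{1..q} - I k.
                      alpha k j = t k j + (\<Sum>i\<in>I k. gamma k j i * alpha k i)"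
    and N_pos: "N > 0"
    and N_int: "\<forall>k\<in>{q+1..m}. \<forall>j\<in>{1..q} - I k. \<forall>i\<in>I k. of_nat N * gamma k j i \<in> \<int>"
  shows "cdim (closure (int_gen u m))
           = of_nat (L_MH u q m I gamma N)
             + \<i> * (of_nat q - of_nat (L_MH u q m I gamma N))"
proof -
  interpret ordered_generators u m q N alpha I t gamma
    by unfold_locales (fact qm basis_inj basis_indep basis_span alpha_def I_sub I_indep t_rat
        gamma_rel N_pos N_int)+
  have "cdim_p (closure (int_gen u m)) = dim (span uprimes)"
    using subspace_span span_uprimes_subset_closure subspace_in_closure_subset_span_uprimes
    by (rule cdim_p_eqI)
  moreover have "dim (span (closure (int_gen u m))) = q"
    using span_closure_int_gen dim_span_basis by simp
  ultimately show ?thesis by (simp add: cdim_def L_MH_eq_dim_span_uprimes)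
qed

end
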